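(* If $x\in\mathrm{Sort}_n(132,321)$, then $x$ avoids the bivincular pattern $132^{\star}$.
   Context: An occurrence of the bivincular pattern $132^{\star}$ in $x=x_1\cdots x_n$ is a triple of indices $a<b$, $b+1\le n$ with $x_a<x_{b+1}$ and $x_b=x_{b+1}+1$ (so $x_ax_bx_{b+1}$ is an occurrence of $132$ whose last two entries are adjacent in position and consecutive in value). A permutation contains a classical pattern $p$ if it has a subsequence order-isomorphic to $p$. For a set $T$ of patterns, the map $s_T$ is defined as follows: the entries of the input permutation are read from left to right, with an initially empty stack. At each step, if the input is nonempty and pushing the next input entry onto the stack produces a stack whose contents, read from top to bottom, avoid every pattern in $T$, that entry is pushed; otherwise the top entry of the stack is popped and appended to the output. When the input is exhausted, the remaining stack entries are popped one at a time to the output. Write $s_{\sigma,\tau}=s_{\{\sigma,\tau\}}$ and $s=s_{\{21\}}$ (West's stack-sorting map). $\mathrm{Sort}_n(\sigma,\tau)$ is the set of $x\in S_n$ with $s(s_{\sigma,\tau}(x))=12\cdots n$. *)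

theory Defs
  imports "HOL-Combinatorics.Multiset_Permutations" "HOL-Library.Sublist"
begin

text \<open>Permutations of length n are lists over {1..n} (one-line notation, 0-indexed positions).\<close>

definition order_iso :: "nat list \<Rightarrow> nat list \<Rightarrow> bool" where
  "order_iso xs ys \<longleftrightarrow> length xs = length ys \<and>
     (\<forall>i < length xs. \<forall>j < length xs. (xs ! i < xs ! j) = (ys ! i < ys ! j))"

definition contains :: "nat list \<Rightarrow> nat list \<Rightarrow> bool" where
  "contains x p \<longleftrightarrow> (\<exists>ys. subseq ys x \<and> order_iso ys p)"

definition avoids_all :: "nat list set \<Rightarrow> nat list \<Rightarrow> bool" where
  "avoids_all T x \<longleftrightarrow> (\<forall>p\<in>T. \<not> contains x p)"

text \<open>The stack is a list whose head is the top,
  so the list itself is the stack contents read from top to bottom.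
  Arguments: pattern set, remaining input, current stack; result: output.
  (If a push is forbidden while the stack is empty, the entry is pushed anyway;
  this case never occurs for patterns of length at least 2.)\<close>
fun stack_run :: "nat list set \<Rightarrow> nat list \<Rightarrow> nat list \<Rightarrow> nat list" where
  "stack_run T [] st = st"
| "stack_run T (a # inp) st =
     (if avoids_all T (a # st) then stack_run T inp (a # st)
      else (case st of [] \<Rightarrow> stack_run T inp [a]
                     | b # st' \<Rightarrow> b # stack_run T (a # inp) st'))"

definition s_T :: "nat list set \<Rightarrow> nat list \<Rightarrow> nat list" where
  "s_T T x = stack_run T x []"

definition s_pair :: "nat list \<Rightarrow> nat list \<Rightarrow> nat list \<Rightarrow> nat list" where
  "s_pair \<sigma> \<tau> = s_T {\<sigma>, \<tau>}"

definition west_s :: "nat list \<Rightarrow> nat list" where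
  "west_s = s_T {[2, 1]}"

definition Sort :: "nat \<Rightarrow> nat list \<Rightarrow> nat list \<Rightarrow> nat list set" where
  "Sort n \<sigma> \<tau> = {x \<in> permutations_of_set {1..n}. west_s (s_pair \<sigma> \<tau> x) = [1..<n+1]}"

definition contains_132star :: "nat list \<Rightarrow> bool" where
  "contains_132star x \<longleftrightarrow> (\<exists>a b. a < b \<and> b + 1 < length x \<and>
      x ! a < x ! (b + 1) \<and> x ! b = x ! (b + 1) + 1)"

end

theory Submission
  imports Defs
begin

text \<open>
  Write x = \<dots> (c+1) c \<dots> with an entry smaller than c before c+1, and let m be the smallest
  entry before c+1. In s_{132,321}, whenever m is on top of the stack, the entries below it are
  increasing (a descent there would form a 132 with m), so every entry may be pushed onto m: m is
  never popped while input remains. Thus c+1 lands above m, and c is then pushed directly onto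
  c+1, so s_{132,321}(x) contains c, c+1, m in this order, an occurrence of 231. West's map does
  not sort such a permutation: c blocks the push of c+1, so c leaves the stack before m is read.
\<close>

section \<open>Patterns of length three\<close>

lemma order_iso_3:
  "order_iso [a, b, c] [p, q, r] \<longleftrightarrow>
     (a < b \<longleftrightarrow> p < q) \<and> (b < a \<longleftrightarrow> q < p) \<and> (a < c \<longleftrightarrow> p < r) \<and>
     (c < a \<longleftrightarrow> r < p) \<and> (b < c \<longleftrightarrow> q < r) \<and> (c < b \<longleftrightarrow> r < q)"
  by (auto simp: order_iso_def numeral_3_eq_3 All_less_Suc)

lemma contains_3_iff:
  "contains w [p, q, r] \<longleftrightarrow> (\<exists>a b c. subseq [a, b, c] w \<and> order_iso [a, b, c] [p, q, r])"
proof -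
  have "order_iso ys [p, q, r] \<Longrightarrow> \<exists>a b c. ys = [a, b, c]" for ys
    by (auto simp: order_iso_def length_Suc_conv)
  then show ?thesis
    unfolding contains_def by blast
qed

lemma contains_132_iff: "contains w [1, 3, 2] \<longleftrightarrow> (\<exists>a b c. subseq [a, b, c] w \<and> a < c \<and> c < b)"
  unfolding contains_3_iff order_iso_3 by (intro ex_cong1) auto

lemma contains_321_iff: "contains w [3, 2, 1] \<longleftrightarrow> (\<exists>a b c. subseq [a, b, c] w \<and> b < a \<and> c < b)"
  unfolding contains_3_iff order_iso_3 by (intro ex_cong1) auto

lemma contains_231_iff: "contains w [2, 3, 1] \<longleftrightarrow> (\<exists>a b c. subseq [a, b, c] w \<and> c < a \<and> a < b)"
  unfolding contains_3_iff order_iso_3 by (intro ex_cong1) auto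

lemma subseq_Cons_right_iff:
  "subseq (y # ys) (a # w) \<longleftrightarrow> subseq (y # ys) w \<or> (y = a \<and> subseq ys w)"
  by (cases "y = a") (auto intro: subseq_Cons')

lemma subseq_triple_iff:
  "subseq [a, b, c] w \<longleftrightarrow> (\<exists>p q. w = p @ b # q \<and> a \<in> set p \<and> c \<in> set q)"
proof
  assume "subseq [a, b, c] w"
  then obtain p1 p2 q where "w = p1 @ a # p2 @ b # q" "c \<in> set q"
    by (auto dest!: list_emb_ConsD simp: subseq_singleton_left)
  then show "\<exists>p q. w = p @ b # q \<and> a \<in> set p \<and> c \<in> set q"
    by (intro exI[of _ "p1 @ a # p2"] exI[of _ q]) auto
next
  assume "\<exists>p q. w = p @ b # q \<and> a \<in> set p \<and> c \<in> set q"
  then obtain p q where "w = p @ b # q" "subseq [a] p" "subseq [c] q"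
    by (auto simp: subseq_singleton_left)
  then show "subseq [a, b, c] w"
    using list_emb_append_mono[of "(=)" "[a]" p "[b, c]" "b # q"] by simp
qed

lemma avoids_132_321_iff:
  "avoids_all {[1, 3, 2], [3, 2, 1]} w \<longleftrightarrow> \<not> contains w [1, 3, 2] \<and> \<not> contains w [3, 2, 1]"
  by (simp add: avoids_all_def)

lemma avoids_132_321_Cons_iff:
  "avoids_all {[1, 3, 2], [3, 2, 1]} (a # st) \<longleftrightarrow>
     avoids_all {[1, 3, 2], [3, 2, 1]} st \<and> (\<forall>y z. subseq [y, z] st \<longrightarrow> z < y \<longrightarrow> z \<le> a \<and> a \<le> y)"
proof -
  have "contains (a # st) [1, 3, 2] \<longleftrightarrow>
      contains st [1, 3, 2] \<or> (\<exists>y z. subseq [y, z] st \<and> a < z \<and> z < y)"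
    unfolding contains_132_iff subseq_Cons_right_iff by blast
  moreover have "contains (a # st) [3, 2, 1] \<longleftrightarrow>
      contains st [3, 2, 1] \<or> (\<exists>y z. subseq [y, z] st \<and> y < a \<and> z < y)"
    unfolding contains_321_iff subseq_Cons_right_iff by blast
  ultimately show ?thesis
    unfolding avoids_132_321_iff by (meson not_le)
qed

lemma avoids_132_321_push_over_minimum:
  assumes avoids: "avoids_all {[1, 3, 2], [3, 2, 1]} (m # R)" and min: "\<forall>z\<in>set R. m < z"
  shows "avoids_all {[1, 3, 2], [3, 2, 1]} (a # m # R)"
proof -
  have "\<not> z < y" if yz: "subseq [y, z] (m # R)" for y z
  proof (cases "y = m")
    case True
    then have "z \<in> set R"
      using yz by (simp add: subseq_singleton_left)
    then show ?thesis
      using min True by auto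
  next
    case False
    then have "subseq [m, y, z] (m # R)"
      using yz by simp
    moreover have "m < z"
      using False yz min by (metis subseq_Cons' subseq_Cons2_iff subseq_singleton_left)
    ultimately show ?thesis
      using avoids unfolding avoids_132_321_iff contains_132_iff by blast
  qed
  then show ?thesis
    using avoids avoids_132_321_Cons_iff[of a "m # R"] by blast
qed

lemma avoids_132_321_push_predecessor:
  assumes avoids: "avoids_all {[1, 3, 2], [3, 2, 1]} (Suc c # R)" and fresh: "Suc c \<notin> set R"
  shows "avoids_all {[1, 3, 2], [3, 2, 1]} (c # Suc c # R)"
proof -
  have "z \<le> c \<and> c \<le> y" if yz: "subseq [y, z] (Suc c # R)" and "z < y" for y z
  proof (cases "y = Suc c")
    case False
    then have "subseq [Suc c, y, z] (Suc c # R)"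
      using yz by simp
    moreover have "z \<noteq> Suc c"
      using False yz fresh by (metis subseq_Cons' subseq_Cons2_iff subseq_singleton_left)
    ultimately have "\<not> (Suc c < z \<and> z < y)" "\<not> (y < Suc c \<and> z < y)"
      using avoids unfolding avoids_132_321_iff contains_132_iff contains_321_iff by blast+
    then show ?thesis
      using \<open>z < y\<close> \<open>z \<noteq> Suc c\<close> by linarith
  qed (use \<open>z < y\<close> in auto)
  then show ?thesis
    using avoids avoids_132_321_Cons_iff[of c "Suc c # R"] by blast
qed

lemma avoids_132_321_singleton: "avoids_all {[1, 3, 2], [3, 2, 1]} [a]"
  unfolding avoids_132_321_iff contains_132_iff contains_321_iff by simp

lemma avoids_132_321_Nil: "avoids_all {[1, 3, 2], [3, 2, 1]} []"
  unfolding avoids_132_321_iff contains_132_iff contains_321_iff by simp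

section \<open>The pattern-avoiding stack machine\<close>

text \<open>The output produced and the stack reached once all of p has been read; the stack is not
  emptied at the end.\<close>

fun stack_feed :: "nat list set \<Rightarrow> nat list \<Rightarrow> nat list \<Rightarrow> nat list \<times> nat list" where
  "stack_feed T [] st = ([], st)"
| "stack_feed T (a # inp) st =
     (if avoids_all T (a # st) then stack_feed T inp (a # st)
      else (case st of [] \<Rightarrow> stack_feed T inp [a]
                     | b # st' \<Rightarrow> apfst (Cons b) (stack_feed T (a # inp) st')))"

declare stack_feed.simps(2) [simp del] stack_run.simps(2) [simp del]

lemma stack_feed_push [simp]:
  "avoids_all T (a # st) \<Longrightarrow> stack_feed T (a # inp) st = stack_feed T inp (a # st)"
  by (simp add: stack_feed.simps(2))

lemma stack_feed_push_empty [simp]: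
  "\<not> avoids_all T [a] \<Longrightarrow> stack_feed T (a # inp) [] = stack_feed T inp [a]"
  by (simp add: stack_feed.simps(2))

lemma stack_feed_pop [simp]:
  "\<not> avoids_all T (a # b # st) \<Longrightarrow>
     stack_feed T (a # inp) (b # st) = apfst (Cons b) (stack_feed T (a # inp) st)"
  by (simp add: stack_feed.simps(2))

lemma stack_run_push [simp]:
  "avoids_all T (a # st) \<Longrightarrow> stack_run T (a # inp) st = stack_run T inp (a # st)"
  by (simp add: stack_run.simps(2))

lemma stack_run_push_empty [simp]:
  "\<not> avoids_all T [a] \<Longrightarrow> stack_run T (a # inp) [] = stack_run T inp [a]"
  by (simp add: stack_run.simps(2))

lemma stack_run_pop [simp]:
  "\<not> avoids_all T (a # b # st) \<Longrightarrow> stack_run T (a # inp) (b # st) = b # stack_run T (a # inp) st"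
  by (simp add: stack_run.simps(2))

text \<open>stack_run.induct generalises over the pattern set; fixing it lets the induction hypotheses
  be combined with facts about that particular set.\<close>

lemma stack_machine_induct [case_names Nil push push_empty pop]:
  assumes "\<And>st. P [] st"
    and "\<And>a inp st. avoids_all T (a # st) \<Longrightarrow> P inp (a # st) \<Longrightarrow> P (a # inp) st"
    and "\<And>a inp. \<not> avoids_all T [a] \<Longrightarrow> P inp [a] \<Longrightarrow> P (a # inp) []"
    and "\<And>a b inp st. \<not> avoids_all T (a # b # st) \<Longrightarrow> P (a # inp) st \<Longrightarrow> P (a # inp) (b # st)"
  shows "P inp st"
proof -
  have "T' = T \<Longrightarrow> P inp st" for T'
  proof (induction T' inp st rule: stack_run.induct)
    case (2 T' a inp st)
    then show ?case
      using assms(2-4) by (cases st; cases "avoids_all T (a # st)") auto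
  qed (use assms(1) in blast)
  then show ?thesis by blast
qed

lemma stack_run_append:
  "stack_run T (p @ inp) st = fst (stack_feed T p st) @ stack_run T inp (snd (stack_feed T p st))"
  by (induction p st rule: stack_machine_induct[where T = T]) auto

lemma snd_stack_feed_append:
  "snd (stack_feed T (p @ q) st) = snd (stack_feed T q (snd (stack_feed T p st)))"
  by (induction p st rule: stack_machine_induct[where T = T]) auto

lemma mset_stack_run: "mset (stack_run T inp st) = mset inp + mset st"
  by (induction inp st rule: stack_machine_induct[where T = T]) auto

lemma set_stack_run: "set (stack_run T inp st) = set inp \<union> set st"
  by (metis mset_stack_run set_mset_mset set_mset_union)

lemma distinct_s_T_iff: "distinct (s_T T x) \<longleftrightarrow> distinct x"
  by (metis s_T_def mset_stack_run mset_eq_imp_distinct_iff append_Nil2 mset_append)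

lemma distinct_stack_feed: "distinct (p @ st) \<Longrightarrow> distinct (snd (stack_feed T p st))"
  by (induction p st rule: stack_machine_induct[where T = T]) auto

lemma stack_feed_last_on_top: "\<exists>s'. snd (stack_feed T (p @ [e]) st) = e # s'"
proof -
  have "\<exists>s'. snd (stack_feed T [e] st') = e # s'" for st'
    by (induction "[e]" st' rule: stack_machine_induct[where T = T]) auto
  then show ?thesis
    by (simp add: snd_stack_feed_append)
qed

lemma avoids_all_ConsD: "avoids_all T (b # st) \<Longrightarrow> avoids_all T st"
  unfolding avoids_all_def contains_def using list_emb_Cons by blast

lemma stack_feed_avoids:
  "(\<And>a. avoids_all T [a]) \<Longrightarrow> avoids_all T st \<Longrightarrow> avoids_all T (snd (stack_feed T p st))"
  by (induction p st rule: stack_machine_induct[where T = T]) (auto dest: avoids_all_ConsD)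

lemma stack_feed_keeps_minimum:
  assumes singleton: "\<And>a. avoids_all T [a]"
    and push_over_m: "\<And>R a. avoids_all T (m # R) \<Longrightarrow> \<forall>z\<in>set R. m < z \<Longrightarrow> m < a \<Longrightarrow>
                               avoids_all T (a # m # R)"
  shows "distinct (p @ st) \<Longrightarrow> avoids_all T st \<Longrightarrow> m \<in> set p \<union> set st \<Longrightarrow>
    \<forall>z\<in>set p \<union> set st. m \<le> z \<Longrightarrow> m \<in> set (snd (stack_feed T p st))"
proof (induction p st rule: stack_machine_induct[where T = T])
  case (push a inp st)
  then show ?case by auto
next
  case (push_empty a inp)
  then show ?case using singleton by blast
next
  case (pop a b inp st)
  have "m \<noteq> b"
  proof
    assume "m = b"
    moreover have "\<forall>z\<in>set st. m < z" and "m < a"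
      using pop.prems \<open>m = b\<close> by (auto simp: order.order_iff_strict)
    ultimately show False
      using push_over_m pop.prems(2) pop.hyps by blast
  qed
  then show ?case
    using pop by (auto dest: avoids_all_ConsD)
qed simp

lemma stack_run_preserves_stack_order:
  "st = s1 @ e # s2 \<Longrightarrow>
     \<exists>u v. stack_run T inp st = u @ e # v \<and> set s1 \<subseteq> set u \<and> set s2 \<subseteq> set v"
proof (induction inp st arbitrary: s1 rule: stack_machine_induct[where T = T])
  case (push a inp st)
  then obtain u v where "stack_run T inp (a # st) = u @ e # v" "set (a # s1) \<subseteq> set u" "set s2 \<subseteq> set v"
    by fastforce
  then show ?case using push by auto
next
  case (push_empty a inp)
  then show ?case by simp
next
  case (pop a b inp st)
  show ?case
  proof (cases s1)
    case Nil
    then show ?thesis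
      using pop set_stack_run[of T "a # inp" s2]
      by (intro exI[of _ "[]"] exI[of _ "stack_run T (a # inp) s2"]) auto
  next
    case (Cons b' s1')
    then obtain u v where "stack_run T (a # inp) st = u @ e # v" "set s1' \<subseteq> set u" "set s2 \<subseteq> set v"
      using pop by auto
    then show ?thesis
      using pop Cons by (intro exI[of _ "b' # u"] exI[of _ v]) auto
  qed
qed auto

lemma stack_run_outputs_blocker_first:
  assumes blocks: "\<And>st. c \<in> set st \<Longrightarrow> \<not> avoids_all T (e # st)"
  shows "inp = p @ e # q \<Longrightarrow> c \<in> set st \<union> set p \<Longrightarrow>
    \<exists>u v. stack_run T inp st = u @ c # v \<and> set u \<subseteq> set st \<union> set p"
proof (induction inp st arbitrary: p rule: stack_machine_induct[where T = T])
  case (push a inp st)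
  have "p \<noteq> []"
  proof
    assume "p = []"
    then show False
      using push blocks[of st] by auto
  qed
  with push show ?case
    by (cases p) fastforce+
next
  case (push_empty a inp)
  then show ?case
    by (cases p) fastforce+
next
  case (pop a b inp st)
  show ?case
  proof (cases "b = c")
    case True
    then show ?thesis
      using pop.hyps by (intro exI[of _ "[]"] exI[of _ "stack_run T (a # inp) st"]) simp
  next
    case False
    then obtain u v where "stack_run T (a # inp) st = u @ c # v" "set u \<subseteq> set st \<union> set p"
      using pop by auto
    then show ?thesis
      using pop.hyps by (intro exI[of _ "b # u"] exI[of _ v]) auto
  qed
qed auto

section \<open>West's stack-sorting map and the pattern 231\<close>

lemma west_push_blocked: "c \<in> set st \<Longrightarrow> c < e \<Longrightarrow> \<not> avoids_all {[2, 1]} (e # st)"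
  unfolding avoids_all_def contains_def
  by (auto simp: order_iso_def subseq_singleton_left numeral_2_eq_2 All_less_Suc
      intro!: exI[of _ "[e, c]"])

lemma sorted_west_s_avoids_231:
  assumes "distinct y" and "sorted (west_s y)"
  shows "\<not> contains y [2, 3, 1]"
proof
  assume "contains y [2, 3, 1]"
  then obtain b e a where "subseq [b, e, a] y" "a < b" "b < e"
    unfolding contains_231_iff by blast
  then obtain p q where y: "y = p @ e # q" "b \<in> set p" "a \<in> set q"
    unfolding subseq_triple_iff by blast
  obtain u v where out: "west_s y = u @ b # v" "set u \<subseteq> set p"
    using stack_run_outputs_blocker_first[of b "{[2, 1]}" e y p q "[]"] west_push_blocked \<open>b < e\<close> y
    unfolding west_s_def s_T_def by auto
  have "a \<notin> set u"
    using out(2) y assms(1) by auto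
  moreover have "a \<in> set (west_s y)"
    unfolding west_s_def s_T_def using y set_stack_run by auto
  ultimately have "a \<in> set v"
    using out(1) \<open>a < b\<close> by auto
  then show False
    using assms(2) out(1) \<open>a < b\<close> by (auto simp: sorted_append)
qed

section \<open>Occurrences of 132* become occurrences of 231\<close>

lemma contains_132starE:
  assumes "contains_132star x"
  obtains pre c post z where "x = pre @ Suc c # c # post" "z \<in> set pre" "z < c"
proof -
  obtain a b where ab: "a < b" "Suc b < length x" "x ! a < x ! Suc b" "x ! b = Suc (x ! Suc b)"
    using assms unfolding contains_132star_def by auto
  have "x = take b x @ drop b x"
    by simp
  also have "drop b x = x ! b # x ! Suc b # drop (Suc (Suc b)) x"
    using ab(2) by (simp add: Cons_nth_drop_Suc)
  finally have "x = take b x @ Suc (x ! Suc b) # x ! Suc b # drop (Suc (Suc b)) x"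
    using ab(4) by simp
  moreover have "x ! a \<in> set (take b x)"
    using ab by (auto simp: in_set_conv_nth intro!: exI[of _ a])
  ultimately show thesis
    using that ab(3) by blast
qed

lemma s_132_321_creates_231:
  assumes dist: "distinct (pre @ Suc c # c # post)" and "z \<in> set pre" "z < c"
  shows "contains (s_pair [1, 3, 2] [3, 2, 1] (pre @ Suc c # c # post)) [2, 3, 1]"
proof -
  let ?T = "{[1, 3, 2], [3, 2, 1]} :: nat list set"
  define m where "m = Min (set pre)"
  define out where "out = fst (stack_feed ?T (pre @ [Suc c]) [])"
  have m: "m \<in> set pre" "\<forall>y\<in>set pre. m \<le> y" "m < c"
    using assms unfolding m_def by (auto intro: Min_in le_less_trans[OF Min_le])
  obtain s' where stack: "snd (stack_feed ?T (pre @ [Suc c]) []) = Suc c # s'"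
    using stack_feed_last_on_top by blast
  have "m \<in> set (Suc c # s')"
    unfolding stack[symmetric]
    using dist m avoids_132_321_singleton avoids_132_321_Nil avoids_132_321_push_over_minimum
    by (intro stack_feed_keeps_minimum) auto
  then have "m \<in> set s'"
    using m by auto
  have "avoids_all ?T (Suc c # s')" and "distinct (Suc c # s')"
    unfolding stack[symmetric] using dist avoids_132_321_singleton avoids_132_321_Nil
    by (auto intro!: stack_feed_avoids distinct_stack_feed)
  then have push_c: "avoids_all ?T (c # Suc c # s')"
    by (meson avoids_132_321_push_predecessor distinct.simps(2))
  have "s_pair [1, 3, 2] [3, 2, 1] (pre @ Suc c # c # post) = stack_run ?T ((pre @ [Suc c]) @ c # post) []"
    unfolding s_pair_def s_T_def by simp
  also have "\<dots> = out @ stack_run ?T post (c # Suc c # s')"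
    unfolding stack_run_append stack out_def using push_c by simp
  finally obtain u v where "s_pair [1, 3, 2] [3, 2, 1] (pre @ Suc c # c # post) = (out @ u) @ Suc c # v"
      "c \<in> set (out @ u)" "m \<in> set v"
    using stack_run_preserves_stack_order[of "c # Suc c # s'" "[c]" "Suc c" s' ?T post] \<open>m \<in> set s'\<close>
    by auto
  then show ?thesis
    using \<open>m < c\<close> lessI[of c] unfolding contains_231_iff subseq_triple_iff by blast
qed

theorem proposition3p3:
  fixes n :: nat and x :: "nat list"
  assumes "x \<in> Sort n [1, 3, 2] [3, 2, 1]"
  shows "\<not> contains_132star x"
proof
  assume "contains_132star x"
  then obtain pre c post z where x: "x = pre @ Suc c # c # post" "z \<in> set pre" "z < c"
    by (rule contains_132starE)
  let ?y = "s_pair [1, 3, 2] [3, 2, 1] x"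
  have "distinct x" and sorted: "west_s ?y = [1..<n + 1]"
    using assms permutations_of_setD(2) unfolding Sort_def by auto
  then have "distinct ?y"
    unfolding s_pair_def by (simp add: distinct_s_T_iff)
  moreover have "sorted (west_s ?y)"
    unfolding sorted by (rule sorted_upt)
  moreover have "contains ?y [2, 3, 1]"
    using s_132_321_creates_231 \<open>distinct x\<close> x by blast
  ultimately show False
    using sorted_west_s_avoids_231 by blast
qed

end
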